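(* Let $\chi$ be an indecomposable character on $S(2^\infty)$ with GNS triple $(\pi,\mathcal{H},\xi)$. For every nice set $A\subset X$ the weak operator limit $P^A=\mathrm{w\text{-}lim}_{m\to\infty}\pi(s^A_m)$ exists, and $P^A$ is an orthogonal projection.
   Context: Let $X=\{0,1\}^{\mathbb{N}}$, $X_n=\{0,1\}^n$, and $S(2^n)$ the group of all bijections of $X_n$, acting on $X$ by $s((x,a))=(s(x),a)$ ($x\in X_n$, $a\in X$); $S(2^\infty)=\bigcup_n S(2^n)$. A character on a group $G$ is a function $\chi$ with $\chi(g_1g_2)=\chi(g_2g_1)$, $(\chi(g_ig_j^{-1}))_{i,j}$ positive semidefinite for all finite families, and $\chi(e)=1$; it is indecomposable if it is not a nontrivial convex combination of two distinct characters. The GNS triple $(\pi,\mathcal{H},\xi)$ of $\chi$ consists of a unitary representation $\pi$ of $S(2^\infty)$ on a Hilbert space $\mathcal{H}$ and a unit cyclic vector $\xi$ with $\chi(g)=(\pi(g)\xi,\xi)$. For $C\subset X_k$, $C\times X$ denotes the set of sequences in $X$ whose first $k$ coordinates form an element of $C$. A set $A\subset X$ is nice if $A=C\times X$ for some $k\in\mathbb{N}$ and $C\subset X_k$. For such $A$ and $m>k$, $s^A_m\in S(2^\infty)$ is defined by $s^A_m(x)=x$ if $x\in A$ and $s^A_m(x)=(x_1,\dots,x_{m-1},1-x_m,x_{m+1},\dots)$ if $x\notin A$. *)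

theory Defs
  imports "HOL-Analysis.Analysis"
begin

text \<open>X = {0,1}^N is modelled as nat => bool (coordinate x_k of the paper is x (k-1),
  i.e. coordinates are 0-indexed here); X_n = {0,1}^n as bool lists of length n.\<close>

type_synonym cantor = "nat \<Rightarrow> bool"

definition Xn :: "nat \<Rightarrow> bool list set" where
  "Xn n = {xs. length xs = n}"

text \<open>s in S(2^n) acts on X by s((x,a)) = (s(x),a).\<close>
definition act_fin :: "nat \<Rightarrow> (bool list \<Rightarrow> bool list) \<Rightarrow> cantor \<Rightarrow> cantor" where
  "act_fin n s x = (let ys = s (map x [0..<n]) in (\<lambda>i. if i < n then ys ! i else x i))"

definition S2n :: "nat \<Rightarrow> (cantor \<Rightarrow> cantor) set" where
  "S2n n = {act_fin n s | s. bij_betw s (Xn n) (Xn n)}"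

definition S2inf :: "(cantor \<Rightarrow> cantor) set" where
  "S2inf = (\<Union>n. S2n n)"

text \<open>Group law: composition; identity: id; inverse: inv.\<close>

definition psd_matrix :: "nat \<Rightarrow> (nat \<Rightarrow> nat \<Rightarrow> complex) \<Rightarrow> bool" where
  "psd_matrix n M \<longleftrightarrow>
     (\<forall>i<n. \<forall>j<n. M j i = cnj (M i j)) \<and>
     (\<forall>c :: nat \<Rightarrow> complex. 0 \<le> Re (\<Sum>i<n. \<Sum>j<n. cnj (c i) * M i j * c j))"

definition is_character :: "((cantor \<Rightarrow> cantor) \<Rightarrow> complex) \<Rightarrow> bool" where
  "is_character chi \<longleftrightarrow>
     (\<forall>g1\<in>S2inf. \<forall>g2\<in>S2inf. chi (g1 \<circ> g2) = chi (g2 \<circ> g1)) \<and>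
     (\<forall>n (g :: nat \<Rightarrow> cantor \<Rightarrow> cantor). (\<forall>i<n. g i \<in> S2inf) \<longrightarrow>
         psd_matrix n (\<lambda>i j. chi (g i \<circ> inv (g j)))) \<and>
     chi id = 1"

text \<open>Characters are functions on the group S2inf, so they are compared on S2inf.\<close>
definition indecomposable_character :: "((cantor \<Rightarrow> cantor) \<Rightarrow> complex) \<Rightarrow> bool" where
  "indecomposable_character chi \<longleftrightarrow> is_character chi \<and>
     \<not> (\<exists>t::real. 0 < t \<and> t < 1 \<and> (\<exists>chi1 chi2. is_character chi1 \<and> is_character chi2 \<and>
          (\<exists>g\<in>S2inf. chi1 g \<noteq> chi2 g) \<and>
          (\<forall>g\<in>S2inf. chi g = of_real t * chi1 g + of_real (1 - t) * chi2 g)))"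

locale complex_hilbert_space = vector_space scl
  for scl :: "complex \<Rightarrow> 'h::ab_group_add \<Rightarrow> 'h" +
  fixes ip :: "'h \<Rightarrow> 'h \<Rightarrow> complex"
  assumes ip_add_left: "ip (x + y) z = ip x z + ip y z"
    and ip_scale_left: "ip (scl a x) y = a * ip x y"
    and ip_cnj_sym: "ip y x = cnj (ip x y)"
    and ip_nonneg: "0 \<le> Re (ip x x)"
    and ip_definite: "ip x x = 0 \<Longrightarrow> x = 0"
    and ip_complete: "(\<forall>e>0. \<exists>N. \<forall>m\<ge>N. \<forall>n\<ge>N. sqrt (Re (ip (u m - u n) (u m - u n))) < e)
        \<Longrightarrow> \<exists>x. (\<lambda>n. sqrt (Re (ip (u n - x) (u n - x)))) \<longlonglongrightarrow> 0"

definition hnorm :: "('h \<Rightarrow> 'h \<Rightarrow> complex) \<Rightarrow> 'h \<Rightarrow> real" where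
  "hnorm ip x = sqrt (Re (ip x x))"

definition unitary_rep ::
  "(complex \<Rightarrow> 'h::ab_group_add \<Rightarrow> 'h) \<Rightarrow> ('h \<Rightarrow> 'h \<Rightarrow> complex) \<Rightarrow> ((cantor \<Rightarrow> cantor) \<Rightarrow> 'h \<Rightarrow> 'h) \<Rightarrow> bool" where
  "unitary_rep scl ip \<pi> \<longleftrightarrow>
     (\<forall>g\<in>S2inf. Vector_Spaces.linear scl scl (\<pi> g) \<and> bij (\<pi> g) \<and>
        (\<forall>u v. ip (\<pi> g u) (\<pi> g v) = ip u v)) \<and>
     (\<forall>g\<in>S2inf. \<forall>h\<in>S2inf. \<pi> (g \<circ> h) = \<pi> g \<circ> \<pi> h)"

definition cyclic_vector ::
  "(complex \<Rightarrow> 'h::ab_group_add \<Rightarrow> 'h) \<Rightarrow> ('h \<Rightarrow> 'h \<Rightarrow> complex) \<Rightarrow> ((cantor \<Rightarrow> cantor) \<Rightarrow> 'h \<Rightarrow> 'h) \<Rightarrow> 'h \<Rightarrow> bool" where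
  "cyclic_vector scl ip \<pi> \<xi> \<longleftrightarrow>
     (\<forall>v. \<forall>e>0. \<exists>w\<in>module.span scl ((\<lambda>g. \<pi> g \<xi>) ` S2inf). hnorm ip (v - w) < e)"

definition GNS_triple ::
  "((cantor \<Rightarrow> cantor) \<Rightarrow> complex) \<Rightarrow> (complex \<Rightarrow> 'h::ab_group_add \<Rightarrow> 'h) \<Rightarrow> ('h \<Rightarrow> 'h \<Rightarrow> complex)
     \<Rightarrow> ((cantor \<Rightarrow> cantor) \<Rightarrow> 'h \<Rightarrow> 'h) \<Rightarrow> 'h \<Rightarrow> bool" where
  "GNS_triple chi scl ip \<pi> \<xi> \<longleftrightarrow>
     complex_hilbert_space scl ip \<and> unitary_rep scl ip \<pi> \<and>
     hnorm ip \<xi> = 1 \<and> cyclic_vector scl ip \<pi> \<xi> \<and>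
     (\<forall>g\<in>S2inf. chi g = ip (\<pi> g \<xi>) \<xi>)"

definition nice :: "cantor set \<Rightarrow> bool" where
  "nice A \<longleftrightarrow> (\<exists>k C. C \<subseteq> Xn k \<and> A = {x. map x [0..<k] \<in> C})"

text \<open>s^A_m flips the paper's coordinate x_m, which is x (m-1) here.\<close>
definition sA :: "cantor set \<Rightarrow> nat \<Rightarrow> cantor \<Rightarrow> cantor" where
  "sA A m x = (if x \<in> A then x else x((m - 1) := \<not> x (m - 1)))"

definition weak_op_limit ::
  "('h \<Rightarrow> 'h \<Rightarrow> complex) \<Rightarrow> (nat \<Rightarrow> 'h \<Rightarrow> 'h) \<Rightarrow> ('h \<Rightarrow> 'h) \<Rightarrow> bool" where
  "weak_op_limit ip T P \<longleftrightarrow> (\<forall>u v. (\<lambda>m. ip (T m u) v) \<longlonglongrightarrow> ip (P u) v)"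

definition orth_projection ::
  "(complex \<Rightarrow> 'h::ab_group_add \<Rightarrow> 'h) \<Rightarrow> ('h \<Rightarrow> 'h \<Rightarrow> complex) \<Rightarrow> ('h \<Rightarrow> 'h) \<Rightarrow> bool" where
  "orth_projection scl ip P \<longleftrightarrow> Vector_Spaces.linear scl scl P \<and> P \<circ> P = P \<and>
     (\<forall>u v. ip (P u) v = ip u (P v))"

end

(*
  Put U m = \<pi> (s^A_m), and let A depend only on the first k coordinates. For m > k, U m is a
  self-adjoint unitary involution. For g, h in S(2^\<infinity>) moving only coordinates below n and
  indices j, j' \<ge> max n k, conjugating by the transposition of the coordinates j, j' and by
  the flip of coordinate j' controlled by coordinate j commutes with g and h and turns
  s^A_(j+1) into s^A_(j'+1), resp. s^A_(j+1) s^A_(j'+1). Since chi is a class function, the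
  coefficients \<langle>U m \<pi>(g)\<xi>, \<pi>(h)\<xi>\<rangle> are eventually independent of m, and a second
  factor U b with b \<noteq> a is eventually absorbed by U a. By linearity this persists on the span D
  of the orbit of \<xi>, which is dense.

  Consequently, for e in D the vectors U m e eventually have a Gram matrix that is constant off
  the diagonal, so the averages of U m e over the blocks N < m \<le> 2N form a Cauchy sequence;
  by density and completeness these averages converge in norm for every vector, defining a
  linear contraction P. On D the coefficients of U m are eventually constant and equal to those
  of P, so U m \<rightarrow> P weakly by density, and P inherits self-adjointness from the U m.
  Idempotence: for e, f in D and large a, \<langle>U a (P f), e\<rangle> = \<langle>P f, U a e\<rangle> = \<langle>U a f, e\<rangle> by
  the absorption property, and letting a \<rightarrow> \<infinity> gives \<langle>P (P f), e\<rangle> = \<langle>P f, e\<rangle>.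
*)

theory Submission
  imports Defs
begin

section \<open>Finitary permutations of the Cantor space\<close>

definition finitary_perm :: "nat \<Rightarrow> (cantor \<Rightarrow> cantor) \<Rightarrow> bool" where
  "finitary_perm n g \<longleftrightarrow> bij g \<and> (\<forall>x i. n \<le> i \<longrightarrow> g x i = x i) \<and>
     (\<forall>x y. (\<forall>i<n. x i = y i) \<longrightarrow> (\<forall>i<n. g x i = g y i))"

lemma act_fin_below:
  "length (s (map x [0..<n])) = n \<Longrightarrow> i < n \<Longrightarrow> act_fin n s x i = s (map x [0..<n]) ! i"
  by (simp add: act_fin_def Let_def)

lemma act_fin_above: "n \<le> i \<Longrightarrow> act_fin n s x i = x i"
  by (simp add: act_fin_def Let_def)

lemma map_act_fin:
  "length (s (map x [0..<n])) = n \<Longrightarrow> map (act_fin n s x) [0..<n] = s (map x [0..<n])"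
  by (intro nth_equalityI) (auto simp: act_fin_below)

lemma map_upt_eq_iff: "map x [0..<n] = map y [0..<n] \<longleftrightarrow> (\<forall>i<n. x i = y i)"
  by (auto simp: list_eq_iff_nth_eq)

lemma S2n_imp_finitary_perm:
  assumes "g \<in> S2n n" shows "finitary_perm n g"
proof -
  obtain s where g: "g = act_fin n s" and s: "bij_betw s (Xn n) (Xn n)"
    using assms by (auto simp: S2n_def)
  have len: "length (s (map x [0..<n])) = n" for x
    using bij_betw_apply[OF s, of "map x [0..<n]"] by (simp add: Xn_def)
  have low: "map (g x) [0..<n] = s (map x [0..<n])" for x
    unfolding g by (rule map_act_fin[where s=s and x=x and n=n]) (rule len)
  have high: "g x i = x i" if "n \<le> i" for x i
    unfolding g using that by (rule act_fin_above)
  have "inj g"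
  proof (rule injI)
    fix x y assume "g x = g y"
    then have "s (map x [0..<n]) = s (map y [0..<n])" using low by metis
    then have "map x [0..<n] = map y [0..<n]"
      using bij_betw_imp_inj_on[OF s] by (auto simp: Xn_def dest: inj_onD)
    then have "x i = y i" for i
      using \<open>g x = g y\<close> high[of i x] high[of i y] by (cases "i < n") (auto simp: map_upt_eq_iff)
    then show "x = y" by blast
  qed
  moreover have "y \<in> range g" for y
  proof -
    have "map y [0..<n] \<in> s ` Xn n"
      using bij_betw_imp_surj_on[OF s] by (simp add: Xn_def)
    then obtain xs where xs: "xs \<in> Xn n" "s xs = map y [0..<n]" by auto
    define x where "x = (\<lambda>i. if i < n then xs ! i else y i)"
    have "map x [0..<n] = xs" using xs(1) by (intro nth_equalityI) (auto simp: x_def Xn_def)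
    then have "map (g x) [0..<n] = map y [0..<n]" using low xs(2) by simp
    then have "g x i = y i" for i
      using high[of i x] by (cases "i < n") (auto simp: map_upt_eq_iff x_def)
    then have "g x = y" by (simp add: fun_eq_iff)
    then show ?thesis by blast
  qed
  moreover have "\<forall>i<n. g x i = g y i" if "\<forall>i<n. x i = y i" for x y
  proof -
    have "map x [0..<n] = map y [0..<n]" using that by (simp add: map_upt_eq_iff)
    then have "map (g x) [0..<n] = map (g y) [0..<n]" by (simp only: low)
    then show ?thesis by (simp add: map_upt_eq_iff)
  qed
  ultimately show ?thesis
    unfolding finitary_perm_def bij_def using high by auto
qed

definition extend_False :: "bool list \<Rightarrow> cantor" where
  "extend_False xs = (\<lambda>i. if i < length xs then xs ! i else False)"

lemma finitary_perm_imp_S2n: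
  assumes "finitary_perm n g" shows "g \<in> S2n n"
proof -
  have b: "bij g" and high: "\<And>x i. n \<le> i \<Longrightarrow> g x i = x i"
   and low: "\<And>x y i. \<forall>i<n. x i = y i \<Longrightarrow> i < n \<Longrightarrow> g x i = g y i"
    using assms by (auto simp: finitary_perm_def)
  define s where "s = (\<lambda>xs. map (g (extend_False xs)) [0..<n])"
  have map_s: "s (map x [0..<n]) = map (g x) [0..<n]" for x
    unfolding s_def map_upt_eq_iff by (intro allI impI low) (auto simp: extend_False_def)
  have "act_fin n s = g"
  proof (intro ext)
    fix x i show "act_fin n s x i = g x i"
      using map_s[of x] high[of i x] by (cases "i < n") (auto simp: act_fin_def Let_def)
  qed
  moreover have "bij_betw s (Xn n) (Xn n)"
  proof (rule bij_betwI')
    fix xs ys assume xs: "xs \<in> Xn n" and ys: "ys \<in> Xn n"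
    show "s xs = s ys \<longleftrightarrow> xs = ys"
    proof
      assume "s xs = s ys"
      then have "g (extend_False xs) i = g (extend_False ys) i" for i
        using xs ys high[of i] by (cases "i < n") (auto simp: s_def map_upt_eq_iff extend_False_def Xn_def)
      then have "g (extend_False xs) = g (extend_False ys)" by blast
      then have "extend_False xs = extend_False ys" using b by (simp add: bij_def inj_eq)
      then have ext_eq: "extend_False xs i = extend_False ys i" for i by simp
      show "xs = ys"
      proof (rule nth_equalityI)
        show "length xs = length ys" using xs ys by (simp add: Xn_def)
        show "xs ! i = ys ! i" if "i < length xs" for i
          using ext_eq[of i] that \<open>length xs = length ys\<close> by (simp add: extend_False_def)
      qed
    qed simp
  next
    fix xs show "s xs \<in> Xn n" by (simp add: s_def Xn_def)
  next
    fix ys assume ys: "ys \<in> Xn n"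
    obtain x where x: "g x = extend_False ys" using b by (metis bij_def surj_def)
    have "s (map x [0..<n]) = ys"
      using x ys by (auto intro!: nth_equalityI simp: map_s Xn_def extend_False_def)
    then show "\<exists>xs\<in>Xn n. ys = s xs" by (force simp: Xn_def)
  qed
  ultimately show ?thesis by (auto simp: S2n_def)
qed

lemma S2inf_iff_finitary_perm: "g \<in> S2inf \<longleftrightarrow> (\<exists>n. finitary_perm n g)"
  by (auto simp: S2inf_def intro: S2n_imp_finitary_perm finitary_perm_imp_S2n)

lemma finitary_perm_mono:
  assumes "finitary_perm n g" "n \<le> n'" shows "finitary_perm n' g"
proof -
  have high: "\<And>x i. n \<le> i \<Longrightarrow> g x i = x i"
   and low: "\<And>x y i. \<forall>i<n. x i = y i \<Longrightarrow> i < n \<Longrightarrow> g x i = g y i"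
    using assms(1) by (auto simp: finitary_perm_def)
  have "g x i = g y i" if "\<forall>i<n'. x i = y i" "i < n'" for x y i
  proof (cases "i < n")
    case True
    then show ?thesis by (rule low[rotated]) (use that assms(2) in auto)
  qed (use that high[of i] in auto)
  then show ?thesis using assms by (auto simp: finitary_perm_def)
qed

lemma finitary_perm_comp: "finitary_perm n g \<Longrightarrow> finitary_perm n h \<Longrightarrow> finitary_perm n (g \<circ> h)"
  unfolding finitary_perm_def by (auto intro: bij_comp)

lemma finitary_perm_inv:
  assumes "finitary_perm n g" shows "finitary_perm n (inv g)"
proof -
  have b: "bij g" and high: "\<And>x i. n \<le> i \<Longrightarrow> g x i = x i"
   and low: "\<And>x y i. \<forall>i<n. x i = y i \<Longrightarrow> i < n \<Longrightarrow> g x i = g y i"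
    using assms by (auto simp: finitary_perm_def)
  have g_inv: "g (inv g x) = x" for x using b by (simp add: bij_is_surj surj_f_inv_f)
  have high': "inv g x i = x i" if "n \<le> i" for x i
    using high[OF that, of "inv g x"] g_inv by simp
  have low': "inv g x i = inv g y i" if xy: "\<forall>i<n. x i = y i" "i < n" for x y i
  proof -
    define z where "z = (\<lambda>i. if i < n then inv g x i else inv g y i)"
    have "g z = y"
    proof
      fix j show "g z j = y j"
    proof (cases "j < n")
      case True
      then have "g z j = g (inv g x) j" by (intro low) (auto simp: z_def)
      then show ?thesis using g_inv xy True by simp
    next
      case False
      then show ?thesis using high[of j z] high'[of j y] by (simp add: z_def)
    qed
    qed
    then have "z = inv g y" using b by (metis bij_inv_eq_iff)
    then show ?thesis using xy(2) by (metis z_def)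
  qed
  show ?thesis unfolding finitary_perm_def
    using b high' low' by (auto intro: bij_imp_bij_inv)
qed

lemma S2inf_comp: "g \<in> S2inf \<Longrightarrow> h \<in> S2inf \<Longrightarrow> g \<circ> h \<in> S2inf"
  unfolding S2inf_iff_finitary_perm
  using finitary_perm_comp finitary_perm_mono[of _ _ "max _ _"] by (meson max.cobounded1 max.cobounded2)

lemma S2inf_inv: "g \<in> S2inf \<Longrightarrow> inv g \<in> S2inf"
  unfolding S2inf_iff_finitary_perm using finitary_perm_inv by blast

lemma S2inf_id: "id \<in> S2inf"
  unfolding S2inf_iff_finitary_perm finitary_perm_def by auto

lemma S2inf_bij: "g \<in> S2inf \<Longrightarrow> bij g"
  unfolding S2inf_iff_finitary_perm finitary_perm_def by blast

definition depends_below :: "nat \<Rightarrow> cantor set \<Rightarrow> bool" where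
  "depends_below k A \<longleftrightarrow> (\<forall>x y. (\<forall>i<k. x i = y i) \<longrightarrow> (x \<in> A \<longleftrightarrow> y \<in> A))"

lemma nice_imp_depends_below:
  assumes "nice A" shows "\<exists>k. depends_below k A"
proof -
  obtain k C where A: "A = {x. map x [0..<k] \<in> C}" using assms unfolding nice_def by blast
  have "x \<in> A \<longleftrightarrow> y \<in> A" if "\<forall>i<k. x i = y i" for x y
  proof -
    have "map x [0..<k] = map y [0..<k]" using that by (simp only: map_upt_eq_iff)
    then show ?thesis by (simp only: A mem_Collect_eq)
  qed
  then show ?thesis unfolding depends_below_def by blast
qed

definition acts_above :: "nat \<Rightarrow> (cantor \<Rightarrow> cantor) \<Rightarrow> bool" where
  "acts_above n t \<longleftrightarrow> (\<forall>x i. i < n \<longrightarrow> t x i = x i) \<and>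
     (\<forall>x y. (\<forall>i\<ge>n. x i = y i) \<longrightarrow> (\<forall>i\<ge>n. t x i = t y i))"

lemma depends_below_acts_above:
  assumes "depends_below k A" and "acts_above k t" shows "t x \<in> A \<longleftrightarrow> x \<in> A"
proof -
  have "\<forall>i<k. t x i = x i" using assms(2) by (simp add: acts_above_def)
  then show ?thesis using assms(1) unfolding depends_below_def by blast
qed

lemma finitary_perm_commute:
  assumes g: "finitary_perm n g" and t: "acts_above n t" shows "t \<circ> g = g \<circ> t"
proof (intro ext)
  have high: "\<And>x i. n \<le> i \<Longrightarrow> g x i = x i"
   and low: "\<And>x y i. \<forall>i<n. x i = y i \<Longrightarrow> i < n \<Longrightarrow> g x i = g y i"
    using g by (auto simp: finitary_perm_def)
  have t_low: "\<And>x i. i < n \<Longrightarrow> t x i = x i"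
   and t_high: "\<And>x y i. \<forall>i\<ge>n. x i = y i \<Longrightarrow> n \<le> i \<Longrightarrow> t x i = t y i"
    using t by (auto simp: acts_above_def)
  fix x i
  show "(t \<circ> g) x i = (g \<circ> t) x i"
  proof (cases "i < n")
    case True
    then show ?thesis using t_low low[of x "t x" i] by simp
  next
    case False
    then show ?thesis using high t_high[of "g x" x i] by simp
  qed
qed

definition flip_coord :: "nat \<Rightarrow> cantor \<Rightarrow> cantor" where
  "flip_coord j x = x(j := \<not> x j)"

definition swap_coords :: "nat \<Rightarrow> nat \<Rightarrow> cantor \<Rightarrow> cantor" where
  "swap_coords j j' x = x(j := x j', j' := x j)"

definition cond_flip :: "nat \<Rightarrow> nat \<Rightarrow> cantor \<Rightarrow> cantor" where
  "cond_flip j j' x = (if x j then flip_coord j' x else x)"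

lemma acts_above_flip_coord: "n \<le> j \<Longrightarrow> acts_above n (flip_coord j)"
  by (auto simp: acts_above_def flip_coord_def)

lemma acts_above_swap_coords: "n \<le> j \<Longrightarrow> n \<le> j' \<Longrightarrow> acts_above n (swap_coords j j')"
  by (auto simp: acts_above_def swap_coords_def)

lemma acts_above_cond_flip: "n \<le> j \<Longrightarrow> n \<le> j' \<Longrightarrow> acts_above n (cond_flip j j')"
  by (auto simp: acts_above_def cond_flip_def flip_coord_def)

lemma involution_in_S2inf:
  assumes "t \<circ> t = id" and "\<And>x i. n \<le> i \<Longrightarrow> t x i = x i"
    and "\<And>x y i. \<forall>i<n. x i = y i \<Longrightarrow> i < n \<Longrightarrow> t x i = t y i"
  shows "t \<in> S2inf"
proof -
  have "finitary_perm n t"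
    unfolding finitary_perm_def using assms o_bij[OF assms(1) assms(1)] by simp
  then show ?thesis unfolding S2inf_iff_finitary_perm ..
qed

lemma swap_coords_in_S2inf: "swap_coords j j' \<in> S2inf"
  by (rule involution_in_S2inf[where n = "Suc (max j j')"]) (auto simp: swap_coords_def)

lemma cond_flip_in_S2inf: "j \<noteq> j' \<Longrightarrow> cond_flip j j' \<in> S2inf"
  by (rule involution_in_S2inf[where n = "Suc (max j j')"])
    (auto simp: cond_flip_def flip_coord_def fun_eq_iff)

lemma sA_Suc: "sA A (Suc j) x = (if x \<in> A then x else flip_coord j x)"
  by (simp add: sA_def flip_coord_def)

lemma sA_involution:
  assumes "depends_below k A" "k \<le> j" shows "sA A (Suc j) \<circ> sA A (Suc j) = id"
  using depends_below_acts_above[OF assms(1) acts_above_flip_coord[OF assms(2)]]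
  by (auto simp: sA_Suc flip_coord_def)

lemma sA_Suc_in_S2inf:
  assumes "depends_below k A" "k \<le> j" shows "sA A (Suc j) \<in> S2inf"
proof (rule involution_in_S2inf[OF sA_involution[OF assms], where n = "Suc j"])
  show "\<And>x i. Suc j \<le> i \<Longrightarrow> sA A (Suc j) x i = x i" by (simp add: sA_Suc flip_coord_def)
  fix x y :: cantor and i assume "\<forall>i<Suc j. x i = y i" "i < Suc j"
  moreover have "x \<in> A \<longleftrightarrow> y \<in> A" using assms calculation(1) unfolding depends_below_def by auto
  ultimately show "sA A (Suc j) x i = sA A (Suc j) y i" by (auto simp: sA_Suc flip_coord_def)
qed

lemma swap_coords_conj_sA:
  assumes "depends_below k A" "k \<le> j" "k \<le> j'"
  shows "swap_coords j j' \<circ> sA A (Suc j) \<circ> swap_coords j j' = sA A (Suc j')"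
proof
  fix x
  have "swap_coords j j' x \<in> A \<longleftrightarrow> x \<in> A"
    using depends_below_acts_above[OF assms(1) acts_above_swap_coords[OF assms(2,3)]] .
  moreover have "swap_coords j j' (swap_coords j j' x) = x"
    by (auto simp: swap_coords_def)
  moreover have "swap_coords j j' (flip_coord j (swap_coords j j' x)) = flip_coord j' x"
    by (auto simp: swap_coords_def flip_coord_def)
  ultimately show "(swap_coords j j' \<circ> sA A (Suc j) \<circ> swap_coords j j') x = sA A (Suc j') x"
    by (simp add: sA_Suc)
qed

lemma cond_flip_conj_sA:
  assumes "depends_below k A" "k \<le> j" "k \<le> j'" "j \<noteq> j'"
  shows "cond_flip j j' \<circ> sA A (Suc j) \<circ> cond_flip j j' = sA A (Suc j) \<circ> sA A (Suc j')"
proof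
  fix x
  have "cond_flip j j' x \<in> A \<longleftrightarrow> x \<in> A"
    using depends_below_acts_above[OF assms(1) acts_above_cond_flip[OF assms(2,3)]] .
  moreover have "flip_coord j' x \<in> A \<longleftrightarrow> x \<in> A"
    using depends_below_acts_above[OF assms(1) acts_above_flip_coord[OF assms(3)]] .
  moreover have "cond_flip j j' (cond_flip j j' x) = x"
    using assms(4) by (auto simp: cond_flip_def flip_coord_def)
  moreover have "cond_flip j j' (flip_coord j (cond_flip j j' x)) = flip_coord j (flip_coord j' x)"
    using assms(4) by (cases "x j") (auto simp: cond_flip_def flip_coord_def fun_eq_iff)
  ultimately show "(cond_flip j j' \<circ> sA A (Suc j) \<circ> cond_flip j j') x = (sA A (Suc j) \<circ> sA A (Suc j')) x"
    by (simp add: sA_Suc)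
qed

section \<open>Elementary Hilbert space theory\<close>

context complex_hilbert_space
begin

abbreviation hn :: "'h \<Rightarrow> real" where "hn \<equiv> hnorm ip"

lemma ip_zero_left [simp]: "ip 0 z = 0"
  using ip_add_left[of 0 0 z] by simp

lemma ip_zero_right [simp]: "ip z 0 = 0"
  using ip_cnj_sym[of z 0] by simp

lemma ip_minus_left: "ip (- x) z = - ip x z"
proof -
  have "ip x z + ip (- x) z = 0" using ip_add_left[of x "- x" z] by simp
  then show ?thesis by (simp add: add_eq_0_iff)
qed

lemma ip_diff_left: "ip (x - y) z = ip x z - ip y z"
  using ip_add_left[of x "- y" z] ip_minus_left by simp

lemma ip_add_right: "ip z (x + y) = ip z x + ip z y"
  by (metis complex_cnj_add ip_add_left ip_cnj_sym)

lemma ip_diff_right: "ip z (x - y) = ip z x - ip z y"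
  by (metis complex_cnj_diff ip_diff_left ip_cnj_sym)

lemma ip_scale_right: "ip x (scl a y) = cnj a * ip x y"
  by (metis complex_cnj_mult ip_cnj_sym ip_scale_left)

lemma ip_sum_left: "ip (\<Sum>i\<in>I. f i) z = (\<Sum>i\<in>I. ip (f i) z)"
  by (induct I rule: infinite_finite_induct) (auto simp: ip_add_left)

lemma ip_sum_right: "ip z (\<Sum>i\<in>I. f i) = (\<Sum>i\<in>I. ip z (f i))"
  by (induct I rule: infinite_finite_induct) (auto simp: ip_add_right)

lemma ip_self_real: "ip x x = complex_of_real (Re (ip x x))"
  using ip_cnj_sym[of x x] by (simp add: complex_eq_iff)

lemma hn_nonneg: "0 \<le> hn x"
  by (simp add: hnorm_def ip_nonneg)

lemma hn_sq: "(hn x)\<^sup>2 = Re (ip x x)"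
  by (simp add: hnorm_def ip_nonneg)

lemma hn_zero [simp]: "hn 0 = 0"
  by (simp add: hnorm_def)

lemma hn_eq_0D: "hn x = 0 \<Longrightarrow> x = 0"
  by (metis hn_sq ip_definite ip_self_real of_real_0 zero_power2)

lemma hn_scale: "hn (scl a x) = cmod a * hn x"
proof -
  have "Re (ip (scl a x) (scl a x)) = (cmod a)\<^sup>2 * Re (ip x x)"
    by (simp add: ip_scale_left ip_scale_right mult.assoc[symmetric], subst ip_self_real)
      (simp add: complex_mult_cnj cmod_def power2_eq_square)
  then show ?thesis unfolding hnorm_def by (simp add: real_sqrt_mult)
qed

lemma hn_minus: "hn (- x) = hn x"
  using hn_scale[of "-1" x] by simp

lemma hn_diff_commute: "hn (x - y) = hn (y - x)"
  by (metis hn_minus minus_diff_eq)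

lemma cauchy_schwarz: "cmod (ip x y) \<le> hn x * hn y"
proof (cases "y = 0")
  case True then show ?thesis by (simp add: hn_nonneg)
next
  case False
  define b where "b = Re (ip y y)"
  have "b > 0"
    using False ip_nonneg[of y] ip_definite[of y] ip_self_real[of y] unfolding b_def
    by (metis less_eq_real_def of_real_0)
  define t where "t = ip x y / complex_of_real b"
  define q where "q = (cmod (ip x y))\<^sup>2"
  have q: "ip x y * cnj (ip x y) = complex_of_real q"
    unfolding q_def by (rule complex_norm_square[symmetric])
  \<comment> \<open>expand \<open>0 \<le> \<langle>x - t y, x - t y\<rangle>\<close> for the optimal \<open>t = \<langle>x, y\<rangle> / \<langle>y, y\<rangle>\<close>\<close>
  have "ip (x - scl t y) (x - scl t y)
      = ip x x - cnj t * ip x y - t * cnj (ip x y) + t * cnj t * complex_of_real b"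
    unfolding b_def by (simp add: ip_diff_left ip_diff_right ip_scale_left ip_scale_right
        algebra_simps flip: ip_cnj_sym ip_self_real)
  also have "\<dots> = ip x x - complex_of_real (q / b)"
    using q \<open>b > 0\<close> by (simp add: t_def field_simps)
  finally have "q / b \<le> Re (ip x x)"
    using ip_nonneg[of "x - scl t y"] by simp
  then have "(cmod (ip x y))\<^sup>2 \<le> (hn x * hn y)\<^sup>2"
    using \<open>b > 0\<close> by (simp add: q_def b_def hn_sq power_mult_distrib divide_le_eq mult.commute)
  then show ?thesis
    by (meson hn_nonneg mult_nonneg_nonneg power2_le_imp_le)
qed

lemma hn_triangle: "hn (x + y) \<le> hn x + hn y"
proof -
  have "Re (ip y x) = Re (ip x y)" by (subst ip_cnj_sym) simp
  moreover have "Re (ip x y) \<le> hn x * hn y"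
    by (meson order_trans complex_Re_le_cmod cauchy_schwarz)
  moreover have "(hn (x + y))\<^sup>2 = Re (ip x x) + Re (ip x y) + Re (ip y x) + Re (ip y y)"
    by (simp add: hn_sq ip_add_left ip_add_right)
  ultimately have "(hn (x + y))\<^sup>2 \<le> (hn x + hn y)\<^sup>2"
    by (simp add: power2_sum hn_sq)
  then show ?thesis
    by (meson add_nonneg_nonneg hn_nonneg power2_le_imp_le)
qed

lemma hn_sum: "hn (\<Sum>i\<in>I. f i) \<le> (\<Sum>i\<in>I. hn (f i))"
proof (induct I rule: infinite_finite_induct)
  case (insert a F)
  then show ?case using hn_triangle[of "f a" "sum f F"] by simp
qed simp_all

lemma ip_left_cancel: "(\<And>v. ip x v = ip y v) \<Longrightarrow> x = y"
  by (metis ip_definite ip_diff_left right_minus_eq)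

lemma ip_lipschitz_left: "cmod (ip x w - ip y w) \<le> hn w * hn (x - y)"
  using cauchy_schwarz[of "x - y" w] by (simp add: ip_diff_left mult.commute)

lemma ip_lipschitz_right: "cmod (ip w x - ip w y) \<le> hn w * hn (x - y)"
  using cauchy_schwarz[of w "x - y"] by (simp add: ip_diff_right)

definition dense_in :: "'h set \<Rightarrow> bool" where
  "dense_in S \<longleftrightarrow> (\<forall>v r. 0 < r \<longrightarrow> (\<exists>w\<in>S. hn (v - w) < r))"

lemma dense_in_tendsto:
  fixes F :: "nat \<Rightarrow> 'h \<Rightarrow> complex" and G :: "'h \<Rightarrow> complex"
  assumes S: "dense_in S" and L: "0 \<le> L"
    and F_lip: "\<forall>\<^sub>F m in sequentially. \<forall>x y. cmod (F m x - F m y) \<le> L * hn (x - y)"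
    and G_lip: "\<And>x y. cmod (G x - G y) \<le> L * hn (x - y)"
    and conv: "\<And>e. e \<in> S \<Longrightarrow> (\<lambda>m. F m e) \<longlonglongrightarrow> G e"
  shows "(\<lambda>m. F m u) \<longlonglongrightarrow> G u"
proof (rule tendstoI)
  fix r :: real assume "0 < r"
  define \<delta> where "\<delta> = r / (3 * (L + 1))"
  have "0 < \<delta>" using \<open>0 < r\<close> L by (simp add: \<delta>_def)
  then obtain e where e: "e \<in> S" "hn (u - e) < \<delta>" using S by (auto simp: dense_in_def)
  have L\<delta>: "L * hn (u - e) \<le> r / 3"
  proof -
    have "L * hn (u - e) \<le> L * \<delta>" using e(2) L by (simp add: mult_left_mono)
    also have "\<dots> \<le> r / 3" using L \<open>0 < r\<close> by (simp add: \<delta>_def field_simps)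
    finally show ?thesis .
  qed
  have "\<forall>\<^sub>F m in sequentially. dist (F m e) (G e) < r / 3"
    using tendstoD[OF conv[OF e(1)], of "r / 3"] \<open>0 < r\<close> by simp
  then show "\<forall>\<^sub>F m in sequentially. dist (F m u) (G u) < r"
    using F_lip
  proof eventually_elim
    case (elim m)
    have "F m u - G u = (F m u - F m e) + (F m e - G e) + (G e - G u)" by simp
    then have "cmod (F m u - G u) \<le> cmod (F m u - F m e) + cmod (F m e - G e) + cmod (G e - G u)"
      by (metis norm_triangle_ineq add_right_mono order_trans)
    moreover have "cmod (F m u - F m e) \<le> r / 3"
      using elim(2)[rule_format, of u e] L\<delta> by linarith
    moreover have "cmod (G e - G u) \<le> r / 3"
      using G_lip[of e u] L\<delta> by (simp add: hn_diff_commute[of e u])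
    moreover have "cmod (F m e - G e) < r / 3" using elim(1) by (simp add: dist_norm)
    ultimately show ?case by (simp add: dist_norm)
  qed
qed

lemma dense_in_eq:
  fixes F G :: "'h \<Rightarrow> complex"
  assumes "dense_in S" "0 \<le> L"
    and "\<And>x y. cmod (F x - F y) \<le> L * hn (x - y)" "\<And>x y. cmod (G x - G y) \<le> L * hn (x - y)"
    and "\<And>e. e \<in> S \<Longrightarrow> F e = G e"
  shows "F u = G u"
  using dense_in_tendsto[of S L "\<lambda>_. F" G u] assms by (simp add: LIMSEQ_const_iff)

definition norm_tendsto :: "(nat \<Rightarrow> 'h) \<Rightarrow> 'h \<Rightarrow> bool" where
  "norm_tendsto a x \<longleftrightarrow> (\<lambda>n. hn (a n - x)) \<longlonglongrightarrow> 0"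

lemma norm_tendsto_unique:
  assumes "norm_tendsto a x" "norm_tendsto a y" shows "x = y"
proof -
  have "(\<lambda>n. hn (a n - x) + hn (a n - y)) \<longlonglongrightarrow> 0"
    using assms tendsto_add_zero unfolding norm_tendsto_def by blast
  moreover have "hn (x - y) \<le> hn (a n - x) + hn (a n - y)" for n
    using hn_triangle[of "x - a n" "a n - y"] hn_diff_commute[of x "a n"] by simp
  ultimately have "hn (x - y) \<le> 0"
    by (intro LIMSEQ_le_const) auto
  then show ?thesis using hn_nonneg[of "x - y"] hn_eq_0D by fastforce
qed

lemma norm_tendsto_lincomb:
  assumes "norm_tendsto a x" "norm_tendsto b y"
  shows "norm_tendsto (\<lambda>n. scl c (a n) + b n) (scl c x + y)"
  unfolding norm_tendsto_def
proof (rule Lim_null_comparison[OF always_eventually], intro allI)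
  show "(\<lambda>n. cmod c * hn (a n - x) + hn (b n - y)) \<longlonglongrightarrow> 0"
    using assms unfolding norm_tendsto_def by (intro tendsto_add_zero tendsto_mult_right_zero)
  fix n
  have "scl c (a n) + b n - (scl c x + y) = scl c (a n - x) + (b n - y)"
    by (simp add: scale_right_diff_distrib)
  then have "norm (hn (scl c (a n) + b n - (scl c x + y))) = hn (scl c (a n - x) + (b n - y))"
    by (simp only:) (simp add: hn_nonneg)
  also have "\<dots> \<le> cmod c * hn (a n - x) + hn (b n - y)"
    using hn_triangle[of "scl c (a n - x)" "b n - y"] by (simp add: hn_scale)
  finally show "norm (hn (scl c (a n) + b n - (scl c x + y))) \<le> cmod c * hn (a n - x) + hn (b n - y)" .
qed

lemma norm_tendsto_cong:
  "norm_tendsto a x \<Longrightarrow> \<forall>\<^sub>F n in sequentially. a n = b n \<Longrightarrow> norm_tendsto b x"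
  unfolding norm_tendsto_def by (erule Lim_transform_eventually) (auto elim: eventually_mono)

lemma norm_tendsto_hn_le:
  assumes "norm_tendsto a x" "\<forall>\<^sub>F n in sequentially. hn (a n) \<le> C" shows "hn x \<le> C"
proof -
  have "(\<lambda>n. hn (a n - x) + C) \<longlonglongrightarrow> 0 + C"
    using assms(1) unfolding norm_tendsto_def by (intro tendsto_add tendsto_const)
  moreover have "\<forall>\<^sub>F n in sequentially. hn x \<le> hn (a n - x) + C"
    using assms(2)
  proof eventually_elim
    case (elim n)
    then show ?case
      using hn_triangle[of "x - a n" "a n"] hn_diff_commute[of x "a n"] by simp
  qed
  ultimately show ?thesis by (simp add: tendsto_lowerbound)
qed

lemma norm_tendsto_ip:
  assumes "norm_tendsto a x" shows "(\<lambda>n. ip (a n) v) \<longlonglongrightarrow> ip x v"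
proof (rule LIM_zero_cancel, rule Lim_null_comparison[OF always_eventually], intro allI)
  show "(\<lambda>n. hn (a n - x) * hn v) \<longlonglongrightarrow> 0"
    using assms unfolding norm_tendsto_def by (rule tendsto_mult_left_zero)
  fix n
  show "cmod (ip (a n) v - ip x v) \<le> hn (a n - x) * hn v"
    using cauchy_schwarz[of "a n - x" v] by (simp add: ip_diff_left)
qed

lemma cauchy_imp_norm_tendsto:
  assumes "\<And>r. 0 < r \<Longrightarrow> \<exists>N. \<forall>m\<ge>N. \<forall>n\<ge>N. hn (a m - a n) < r"
  shows "\<exists>x. norm_tendsto a x"
  using ip_complete[of a] assms unfolding norm_tendsto_def hnorm_def by blast

end

locale tracial_cyclic_rep = complex_hilbert_space scl ip
  for scl :: "complex \<Rightarrow> 'h::ab_group_add \<Rightarrow> 'h" and ip +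
  fixes \<pi> :: "(cantor \<Rightarrow> cantor) \<Rightarrow> 'h \<Rightarrow> 'h" and \<xi> :: 'h
    and chi :: "(cantor \<Rightarrow> cantor) \<Rightarrow> complex"
  assumes unitary: "unitary_rep scl ip \<pi>"
    and cyclic: "cyclic_vector scl ip \<pi> \<xi>"
    and chi_eq: "\<And>g. g \<in> S2inf \<Longrightarrow> chi g = ip (\<pi> g \<xi>) \<xi>"
    and chi_commute: "\<And>g h. g \<in> S2inf \<Longrightarrow> h \<in> S2inf \<Longrightarrow> chi (g \<circ> h) = chi (h \<circ> g)"
begin

lemma pi_add: "g \<in> S2inf \<Longrightarrow> \<pi> g (x + y) = \<pi> g x + \<pi> g y"
  using unitary unfolding unitary_rep_def Vector_Spaces.linear_iff by blast

lemma pi_scale: "g \<in> S2inf \<Longrightarrow> \<pi> g (scl c x) = scl c (\<pi> g x)"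
  using unitary unfolding unitary_rep_def Vector_Spaces.linear_iff by blast

lemma pi_ip: "g \<in> S2inf \<Longrightarrow> ip (\<pi> g u) (\<pi> g v) = ip u v"
  using unitary unfolding unitary_rep_def by blast

lemma pi_comp: "g \<in> S2inf \<Longrightarrow> h \<in> S2inf \<Longrightarrow> \<pi> (g \<circ> h) x = \<pi> g (\<pi> h x)"
  using unitary unfolding unitary_rep_def by (metis comp_apply)

lemma pi_zero: "g \<in> S2inf \<Longrightarrow> \<pi> g 0 = 0"
  using pi_add[of g 0 0] by simp

lemma pi_diff: "g \<in> S2inf \<Longrightarrow> \<pi> g (x - y) = \<pi> g x - \<pi> g y"
  by (metis diff_add_cancel eq_diff_eq pi_add)

lemma pi_id: "\<pi> id x = x"
proof -
  have "\<pi> id (\<pi> id x) = \<pi> id x" using pi_comp[OF S2inf_id S2inf_id, of x] by simp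
  then show ?thesis
    using unitary S2inf_id unfolding unitary_rep_def bij_def by (metis injD)
qed

lemma pi_involution: "t \<in> S2inf \<Longrightarrow> t \<circ> t = id \<Longrightarrow> \<pi> t (\<pi> t x) = x"
  by (metis pi_comp pi_id)

lemma pi_inv: "g \<in> S2inf \<Longrightarrow> \<pi> (inv g) (\<pi> g x) = x"
  by (metis S2inf_bij S2inf_inv bij_is_inj inv_o_cancel pi_comp pi_id)

lemma ip_orbit: assumes "g \<in> S2inf" "h \<in> S2inf"
  shows "ip (\<pi> g \<xi>) (\<pi> h \<xi>) = chi (inv h \<circ> g)"
proof -
  have "ip (\<pi> g \<xi>) (\<pi> h \<xi>) = ip (\<pi> (inv h) (\<pi> g \<xi>)) (\<pi> (inv h) (\<pi> h \<xi>))"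
    using pi_ip[OF S2inf_inv[OF assms(2)]] by simp
  also have "\<dots> = chi (inv h \<circ> g)"
    using assms by (simp add: pi_inv chi_eq S2inf_inv S2inf_comp pi_comp)
  finally show ?thesis .
qed

lemma ip_orbit_conj:
  assumes t: "t \<in> S2inf" "t \<circ> t = id" and s: "s \<in> S2inf" and g: "g \<in> S2inf" and h: "h \<in> S2inf"
    and tg: "t \<circ> g = g \<circ> t" and th: "t \<circ> inv h = inv h \<circ> t"
  shows "ip (\<pi> (t \<circ> s \<circ> t) (\<pi> g \<xi>)) (\<pi> h \<xi>) = ip (\<pi> s (\<pi> g \<xi>)) (\<pi> h \<xi>)"
proof -
  have tst: "t \<circ> s \<circ> t \<in> S2inf" using t s by (simp add: S2inf_comp)
  have sg: "inv h \<circ> s \<circ> g \<in> S2inf" using s g h by (simp add: S2inf_comp S2inf_inv)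
  have "ip (\<pi> (t \<circ> s \<circ> t) (\<pi> g \<xi>)) (\<pi> h \<xi>) = chi (inv h \<circ> (t \<circ> s \<circ> t \<circ> g))"
    using tst g h by (simp add: ip_orbit S2inf_comp flip: pi_comp)
  also have "inv h \<circ> (t \<circ> s \<circ> t \<circ> g) = t \<circ> ((inv h \<circ> s \<circ> g) \<circ> t)"
    by (metis th tg comp_assoc)
  also have "chi \<dots> = chi ((inv h \<circ> s \<circ> g) \<circ> t \<circ> t)"
    using chi_commute[OF t(1) S2inf_comp[OF sg t(1)]] by (simp add: comp_assoc)
  also have "\<dots> = chi (inv h \<circ> (s \<circ> g))" using t(2) by (simp add: comp_assoc)
  also have "\<dots> = ip (\<pi> s (\<pi> g \<xi>)) (\<pi> h \<xi>)"
    using s g h by (simp add: ip_orbit S2inf_comp flip: pi_comp)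
  finally show ?thesis .
qed

definition orbit :: "'h set" where
  "orbit = (\<lambda>g. \<pi> g \<xi>) ` S2inf"

lemma dense_in_span_orbit: "dense_in (span orbit)"
  using cyclic unfolding cyclic_vector_def dense_in_def orbit_def by blast

end

locale nice_set_rep = tracial_cyclic_rep scl ip \<pi> \<xi> chi
  for scl :: "complex \<Rightarrow> 'h::ab_group_add \<Rightarrow> 'h" and ip \<pi> \<xi> chi +
  fixes A :: "cantor set" and k :: nat
  assumes A_depends: "depends_below k A"
begin

abbreviation U :: "nat \<Rightarrow> 'h \<Rightarrow> 'h" where "U m \<equiv> \<pi> (sA A m)"

lemma sA_in_S2inf: "Suc k \<le> m \<Longrightarrow> sA A m \<in> S2inf"
  using sA_Suc_in_S2inf[OF A_depends, of "m - 1"] by simp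

lemma U_involution: "Suc k \<le> m \<Longrightarrow> U m (U m x) = x"
  using pi_involution[OF sA_in_S2inf] sA_involution[OF A_depends, of "m - 1"] by simp

lemma U_self_adjoint: assumes "Suc k \<le> m" shows "ip (U m x) y = ip x (U m y)"
  using pi_ip[OF sA_in_S2inf[OF assms], of x "U m y"] U_involution[OF assms] by simp

lemma hn_U: "Suc k \<le> m \<Longrightarrow> hn (U m x) = hn x"
  using pi_ip[OF sA_in_S2inf] by (simp add: hnorm_def)

lemma U_add: "Suc k \<le> m \<Longrightarrow> U m (x + y) = U m x + U m y"
  using pi_add[OF sA_in_S2inf] .

lemma U_scale: "Suc k \<le> m \<Longrightarrow> U m (scl c x) = scl c (U m x)"
  using pi_scale[OF sA_in_S2inf] .

lemma U_diff: "Suc k \<le> m \<Longrightarrow> U m (x - y) = U m x - U m y"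
  using pi_diff[OF sA_in_S2inf] .

lemma U_zero: "Suc k \<le> m \<Longrightarrow> U m 0 = 0"
  using pi_zero[OF sA_in_S2inf] .

lemma ip_U_orbit_shift:
  assumes g: "finitary_perm n g" and h: "finitary_perm n h"
    and j: "max n k \<le> j" and j': "max n k \<le> j'"
  shows "ip (U (Suc j') (\<pi> g \<xi>)) (\<pi> h \<xi>) = ip (U (Suc j) (\<pi> g \<xi>)) (\<pi> h \<xi>)"
proof -
  have t: "acts_above n (swap_coords j j')" using j j' by (simp add: acts_above_swap_coords)
  have "swap_coords j j' \<circ> swap_coords j j' = id" by (auto simp: swap_coords_def)
  moreover have "swap_coords j j' \<circ> g = g \<circ> swap_coords j j'"
    "swap_coords j j' \<circ> inv h = inv h \<circ> swap_coords j j'"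
    using finitary_perm_commute[OF g t] finitary_perm_commute[OF finitary_perm_inv[OF h] t] by auto
  moreover have "g \<in> S2inf" "h \<in> S2inf" using g h S2inf_iff_finitary_perm by blast+
  ultimately have "ip (\<pi> (swap_coords j j' \<circ> sA A (Suc j) \<circ> swap_coords j j') (\<pi> g \<xi>)) (\<pi> h \<xi>)
      = ip (U (Suc j) (\<pi> g \<xi>)) (\<pi> h \<xi>)"
    using j by (intro ip_orbit_conj swap_coords_in_S2inf sA_Suc_in_S2inf[OF A_depends]) auto
  then show ?thesis using swap_coords_conj_sA[OF A_depends, of j j'] j j' by simp
qed

lemma ip_U_U_orbit:
  assumes g: "finitary_perm n g" and h: "finitary_perm n h"
    and j: "max n k \<le> j" and j': "max n k \<le> j'" and "j \<noteq> j'"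
  shows "ip (U (Suc j) (U (Suc j') (\<pi> g \<xi>))) (\<pi> h \<xi>) = ip (U (Suc j) (\<pi> g \<xi>)) (\<pi> h \<xi>)"
proof -
  have t: "acts_above n (cond_flip j j')" using j j' by (simp add: acts_above_cond_flip)
  have "cond_flip j j' \<circ> cond_flip j j' = id"
    using \<open>j \<noteq> j'\<close> by (auto simp: cond_flip_def flip_coord_def fun_eq_iff)
  moreover have "cond_flip j j' \<circ> g = g \<circ> cond_flip j j'"
    "cond_flip j j' \<circ> inv h = inv h \<circ> cond_flip j j'"
    using finitary_perm_commute[OF g t] finitary_perm_commute[OF finitary_perm_inv[OF h] t] by auto
  moreover have "g \<in> S2inf" "h \<in> S2inf" using g h S2inf_iff_finitary_perm by blast+
  moreover have "U (Suc j) (U (Suc j') x) = \<pi> (sA A (Suc j) \<circ> sA A (Suc j')) x" for x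
    using j j' by (simp add: pi_comp sA_Suc_in_S2inf[OF A_depends])
  moreover have "\<pi> (cond_flip j j' \<circ> sA A (Suc j) \<circ> cond_flip j j') = \<pi> (sA A (Suc j) \<circ> sA A (Suc j'))"
    using cond_flip_conj_sA[OF A_depends _ _ \<open>j \<noteq> j'\<close>] j j' by simp
  ultimately show ?thesis
    using j \<open>j \<noteq> j'\<close> ip_orbit_conj[of "cond_flip j j'" "sA A (Suc j)" g h]
    by (simp add: cond_flip_in_S2inf sA_Suc_in_S2inf[OF A_depends])
qed

definition tail_stable :: "'h \<Rightarrow> 'h \<Rightarrow> bool" where
  "tail_stable e f \<longleftrightarrow> (\<forall>\<^sub>F N in sequentially. \<forall>a\<ge>N. \<forall>b\<ge>N.
     ip (U a e) f = ip (U b e) f \<and> (a \<noteq> b \<longrightarrow> ip (U a (U b e)) f = ip (U a e) f))"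

lemma tail_stableE:
  assumes "tail_stable e f"
  obtains N where "Suc k \<le> N"
    and "\<And>a b. N \<le> a \<Longrightarrow> N \<le> b \<Longrightarrow> ip (U a e) f = ip (U b e) f"
    and "\<And>a b. N \<le> a \<Longrightarrow> N \<le> b \<Longrightarrow> a \<noteq> b \<Longrightarrow> ip (U a (U b e)) f = ip (U a e) f"
proof -
  have "\<forall>\<^sub>F N in sequentially. Suc k \<le> N \<and> (\<forall>a\<ge>N. \<forall>b\<ge>N.
     ip (U a e) f = ip (U b e) f \<and> (a \<noteq> b \<longrightarrow> ip (U a (U b e)) f = ip (U a e) f))"
    using assms eventually_ge_at_top unfolding tail_stable_def by (rule eventually_conj[rotated])
  then obtain N where "Suc k \<le> N" "\<forall>a\<ge>N. \<forall>b\<ge>N.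
     ip (U a e) f = ip (U b e) f \<and> (a \<noteq> b \<longrightarrow> ip (U a (U b e)) f = ip (U a e) f)"
    using eventually_happens' sequentially_bot by blast
  then show ?thesis using that by blast
qed

lemma tail_stable_orbit:
  assumes "g \<in> S2inf" "h \<in> S2inf" shows "tail_stable (\<pi> g \<xi>) (\<pi> h \<xi>)"
proof -
  obtain n1 n2 where "finitary_perm n1 g" "finitary_perm n2 h"
    using assms S2inf_iff_finitary_perm by blast
  then have g: "finitary_perm (max n1 n2) g" and h: "finitary_perm (max n1 n2) h"
    by (auto intro: finitary_perm_mono)
  define n where "n = max (max n1 n2) k"
  show ?thesis unfolding tail_stable_def eventually_sequentially
  proof (intro exI[of _ "Suc n"] allI impI)
    fix N a b assume "Suc n \<le> N" "N \<le> a" "N \<le> b"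
    then have "a = Suc (a - 1)" "b = Suc (b - 1)" "n \<le> a - 1" "n \<le> b - 1" by simp_all
    then show "ip (U a (\<pi> g \<xi>)) (\<pi> h \<xi>) = ip (U b (\<pi> g \<xi>)) (\<pi> h \<xi>) \<and>
      (a \<noteq> b \<longrightarrow> ip (U a (U b (\<pi> g \<xi>))) (\<pi> h \<xi>) = ip (U a (\<pi> g \<xi>)) (\<pi> h \<xi>))"
      using ip_U_orbit_shift[OF g h, of "a - 1" "b - 1", folded n_def]
        ip_U_U_orbit[OF g h, of "a - 1" "b - 1", folded n_def]
      by (metis diff_Suc_1)
  qed
qed

lemma tail_stable_zero_left: "tail_stable 0 f"
  unfolding tail_stable_def eventually_sequentially
  by (intro exI[of _ "Suc k"]) (simp add: U_zero)

lemma tail_stable_zero_right: "tail_stable e 0"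
  by (simp add: tail_stable_def)

lemma tail_stable_lincomb_left:
  assumes "tail_stable x f" "tail_stable y f" shows "tail_stable (scl c x + y) f"
  using eventually_conj[OF assms(1)[unfolded tail_stable_def]
      eventually_conj[OF assms(2)[unfolded tail_stable_def] eventually_ge_at_top[of "Suc k"]]]
  unfolding tail_stable_def
proof (rule eventually_mono, intro allI impI)
  fix N a b
  assume H: "(\<forall>a\<ge>N. \<forall>b\<ge>N. ip (U a x) f = ip (U b x) f \<and> (a \<noteq> b \<longrightarrow> ip (U a (U b x)) f = ip (U a x) f)) \<and>
      (\<forall>a\<ge>N. \<forall>b\<ge>N. ip (U a y) f = ip (U b y) f \<and> (a \<noteq> b \<longrightarrow> ip (U a (U b y)) f = ip (U a y) f)) \<and>
      Suc k \<le> N" and ab: "N \<le> a" "N \<le> b"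
  then have "Suc k \<le> a" "Suc k \<le> b" by simp_all
  moreover note H[THEN conjunct1, rule_format, OF ab] H[THEN conjunct2, THEN conjunct1, rule_format, OF ab]
  ultimately show "ip (U a (scl c x + y)) f = ip (U b (scl c x + y)) f \<and>
      (a \<noteq> b \<longrightarrow> ip (U a (U b (scl c x + y))) f = ip (U a (scl c x + y)) f)"
    by (simp add: U_add U_scale ip_add_left ip_scale_left)
qed

lemma tail_stable_lincomb_right:
  assumes "tail_stable e x" "tail_stable e y" shows "tail_stable e (scl c x + y)"
  using eventually_conj[OF assms[unfolded tail_stable_def]] unfolding tail_stable_def
proof (rule eventually_mono, intro allI impI)
  fix N a b
  assume H: "(\<forall>a\<ge>N. \<forall>b\<ge>N. ip (U a e) x = ip (U b e) x \<and> (a \<noteq> b \<longrightarrow> ip (U a (U b e)) x = ip (U a e) x)) \<and>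
      (\<forall>a\<ge>N. \<forall>b\<ge>N. ip (U a e) y = ip (U b e) y \<and> (a \<noteq> b \<longrightarrow> ip (U a (U b e)) y = ip (U a e) y))"
    and ab: "N \<le> a" "N \<le> b"
  from H[THEN conjunct1, rule_format, OF ab] H[THEN conjunct2, rule_format, OF ab]
  show "ip (U a e) (scl c x + y) = ip (U b e) (scl c x + y) \<and>
      (a \<noteq> b \<longrightarrow> ip (U a (U b e)) (scl c x + y) = ip (U a e) (scl c x + y))"
    by (simp add: ip_add_right ip_scale_right)
qed

lemma tail_stable_span:
  assumes e: "e \<in> span orbit" and f: "f \<in> span orbit" shows "tail_stable e f"
  using f
proof (induct rule: span_induct_alt)
  case (step c x y)
  from \<open>x \<in> orbit\<close> obtain h where "h \<in> S2inf" "x = \<pi> h \<xi>" by (auto simp: orbit_def)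
  have "tail_stable e x"
    using e
  proof (induct rule: span_induct_alt)
    case (step c' x' y')
    from \<open>x' \<in> orbit\<close> obtain g where "g \<in> S2inf" "x' = \<pi> g \<xi>" by (auto simp: orbit_def)
    then show ?case
      using step(2) tail_stable_orbit \<open>h \<in> S2inf\<close> \<open>x = \<pi> h \<xi>\<close>
      by (simp add: tail_stable_lincomb_left)
  qed (rule tail_stable_zero_left)
  then show ?case using step(2) by (rule tail_stable_lincomb_right)
qed (rule tail_stable_zero_right)

end

section \<open>Block averages and the weak limit\<close>

context nice_set_rep
begin

text \<open>Averaging over the blocks \<open>N < m \<le> 2N\<close> keeps all indices above \<open>k\<close>, where the
  \<open>U m\<close> are unitary; the norm limit of these averages provides the operator \<open>P\<close> directly,
  without a Riesz representation of the weak limit.\<close>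

definition block_avg :: "nat \<Rightarrow> 'h \<Rightarrow> 'h" where
  "block_avg N u = scl (of_real (1 / real N)) (\<Sum>m\<in>{N<..2*N}. U m u)"

lemma block_avg_lincomb:
  assumes "k \<le> N" shows "block_avg N (scl c x + y) = scl c (block_avg N x) + block_avg N y"
proof -
  have "(\<Sum>m\<in>{N<..2*N}. U m (scl c x + y)) = (\<Sum>m\<in>{N<..2*N}. scl c (U m x) + U m y)"
    using assms by (intro sum.cong) (simp_all add: U_add U_scale)
  then show ?thesis
    by (simp add: block_avg_def sum.distrib scale_sum_right scale_right_distrib mult.commute)
qed

lemma hn_block_avg:
  assumes "k \<le> N" shows "hn (block_avg N u) \<le> hn u"
proof (cases "N = 0")
  case False
  have "hn (block_avg N u) = hn (\<Sum>m\<in>{N<..2*N}. U m u) / real N"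
    by (simp add: block_avg_def hn_scale norm_divide)
  also have "\<dots> \<le> (\<Sum>m\<in>{N<..2*N}. hn (U m u)) / real N"
    by (intro divide_right_mono hn_sum) auto
  also have "(\<Sum>m\<in>{N<..2*N}. hn (U m u)) = real N * hn u"
    using assms by (simp add: hn_U)
  finally show ?thesis using False by simp
qed (simp add: block_avg_def hn_nonneg)

lemma ip_block_avg_left:
  "ip (block_avg N u) v = of_real (1 / real N) * (\<Sum>m\<in>{N<..2*N}. ip (U m u) v)"
  by (simp add: block_avg_def ip_scale_left ip_sum_left)

lemma ip_block_avg_right:
  "ip v (block_avg N u) = of_real (1 / real N) * (\<Sum>m\<in>{N<..2*N}. ip v (U m u))"
  by (simp add: block_avg_def ip_scale_right ip_sum_right)

lemma gram_U_span:
  assumes "e \<in> span orbit"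
  obtains n0 c where "Suc k \<le> n0"
    and "\<And>a b. n0 \<le> a \<Longrightarrow> n0 \<le> b \<Longrightarrow> ip (U a e) (U b e) = (if a = b then ip e e else c)"
proof -
  obtain N where N: "Suc k \<le> N"
    and shift: "\<And>a b. N \<le> a \<Longrightarrow> N \<le> b \<Longrightarrow> ip (U a e) e = ip (U b e) e"
    and absorb: "\<And>a b. N \<le> a \<Longrightarrow> N \<le> b \<Longrightarrow> a \<noteq> b \<Longrightarrow> ip (U a (U b e)) e = ip (U a e) e"
    using tail_stable_span[OF assms assms] by (rule tail_stableE) blast
  have "ip (U a e) (U b e) = (if a = b then ip e e else ip (U N e) e)" if "N \<le> a" "N \<le> b" for a b
  proof -
    have "ip (U a e) (U b e) = ip (U b (U a e)) e"
      using U_self_adjoint[of b] N that by simp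
    then show ?thesis
      using U_involution[of a e] absorb[of b a] shift[of b N] N that by auto
  qed
  with N show ?thesis by (rule that)
qed

definition block_overlap :: "nat \<Rightarrow> nat \<Rightarrow> real" where
  "block_overlap N M = real (card ({N<..2*N} \<inter> {M<..2*M})) / (real N * real M)"

lemma block_overlap_diag: "0 < N \<Longrightarrow> block_overlap N N = 1 / real N"
  by (simp add: block_overlap_def)

lemma block_overlap_commute: "block_overlap N M = block_overlap M N"
  by (simp add: block_overlap_def Int_commute mult.commute)

lemma block_overlap_bounds:
  assumes "0 < N" "0 < M" shows "0 \<le> block_overlap N M" "block_overlap N M \<le> 1 / real M"
proof -
  have "card ({N<..2*N} \<inter> {M<..2*M}) \<le> card {N<..2*N}" by (intro card_mono) auto
  then have "real (card ({N<..2*N} \<inter> {M<..2*M})) \<le> real N" by simp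
  then show "block_overlap N M \<le> 1 / real M"
    using assms unfolding block_overlap_def by (simp add: field_simps)
qed (simp add: block_overlap_def)

lemma ip_block_avg_block_avg:
  assumes gram: "\<And>a b. n0 \<le> a \<Longrightarrow> n0 \<le> b \<Longrightarrow> ip (U a e) (U b e) = (if a = b then q else c)"
    and "n0 \<le> N" "n0 \<le> M" "0 < N" "0 < M"
  shows "ip (block_avg N e) (block_avg M e) = c + (q - c) * of_real (block_overlap N M)"
proof -
  have row: "(\<Sum>b\<in>{M<..2*M}. ip (U a e) (U b e)) = of_nat M * c + (if a \<in> {M<..2*M} then q - c else 0)"
    if "a \<in> {N<..2*N}" for a
  proof -
    have "(\<Sum>b\<in>{M<..2*M}. ip (U a e) (U b e)) = (\<Sum>b\<in>{M<..2*M}. c + (if a = b then q - c else 0))"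
      using that assms(2,3) by (intro sum.cong) (simp_all add: gram)
    then show ?thesis by (simp add: sum.distrib)
  qed
  have "ip (block_avg N e) (block_avg M e) = of_real (1 / real N) *
      (\<Sum>a\<in>{N<..2*N}. of_real (1 / real M) * (\<Sum>b\<in>{M<..2*M}. ip (U a e) (U b e)))"
    unfolding ip_block_avg_left by (simp only: ip_block_avg_right)
  also have "\<dots> = of_real (1 / real N) * of_real (1 / real M) *
      (\<Sum>a\<in>{N<..2*N}. of_nat M * c + (if a \<in> {M<..2*M} then q - c else 0))"
    by (simp add: row sum_distrib_left mult.assoc)
  also have "(\<Sum>a\<in>{N<..2*N}. of_nat M * c + (if a \<in> {M<..2*M} then q - c else 0))
      = of_nat N * of_nat M * c + of_nat (card ({N<..2*N} \<inter> {M<..2*M})) * (q - c)"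
  proof -
    have "(\<Sum>a\<in>{N<..2*N}. if a \<in> {M<..2*M} then q - c else 0)
        = of_nat (card ({N<..2*N} \<inter> {M<..2*M})) * (q - c)"
      by (simp only: sum.inter_restrict[symmetric, OF finite_greaterThanAtMost] sum_constant)
    then show ?thesis by (simp add: sum.distrib)
  qed
  finally show ?thesis
    using assms(4,5) by (simp add: block_overlap_def field_simps)
qed

lemma block_avg_diff_bound:
  assumes "e \<in> span orbit"
  obtains n0 B where "0 < n0" "0 \<le> B"
    and "\<And>N M. n0 \<le> N \<Longrightarrow> n0 \<le> M \<Longrightarrow>
      (hn (block_avg N e - block_avg M e))\<^sup>2 \<le> B * (1 / real N + 1 / real M)"
proof -
  obtain n0 c where n0: "Suc k \<le> n0"
    and gram: "\<And>a b. n0 \<le> a \<Longrightarrow> n0 \<le> b \<Longrightarrow> ip (U a e) (U b e) = (if a = b then ip e e else c)"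
    using assms by (rule gram_U_span) blast
  define B where "B = cmod (ip e e - c)"
  have "(hn (block_avg N e - block_avg M e))\<^sup>2 \<le> B * (1 / real N + 1 / real M)"
    if N: "n0 \<le> N" and M: "n0 \<le> M" for N M
  proof -
    have pos: "0 < N" "0 < M" using n0 N M by auto
    define t where "t = 1 / real N + 1 / real M - 2 * block_overlap N M"
    have ip_avg: "ip (block_avg N' e) (block_avg M' e) = c + (ip e e - c) * of_real (block_overlap N' M')"
      if "N' \<in> {N, M}" "M' \<in> {N, M}" for N' M'
      using that N M pos by (intro ip_block_avg_block_avg[OF gram]) auto
    have "ip (block_avg N e - block_avg M e) (block_avg N e - block_avg M e) = (ip e e - c) * of_real t"
      by (simp add: ip_diff_left ip_diff_right ip_avg block_overlap_diag[OF pos(1)]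
          block_overlap_diag[OF pos(2)] block_overlap_commute[of M N] t_def algebra_simps)
    then have "(hn (block_avg N e - block_avg M e))\<^sup>2 = t * Re (ip e e - c)"
      by (simp add: hn_sq)
    also have "\<dots> \<le> t * B"
      unfolding B_def t_def using block_overlap_bounds[OF pos] block_overlap_bounds[OF pos(2,1)]
        block_overlap_commute[of M N]
      by (intro mult_left_mono complex_Re_le_cmod) auto
    also have "\<dots> \<le> B * (1 / real N + 1 / real M)"
      unfolding t_def using block_overlap_bounds[OF pos] by (simp add: B_def mult.commute mult_left_mono)
    finally show ?thesis .
  qed
  then show ?thesis using that[of n0 B] n0 by (simp add: B_def)
qed

lemma block_avg_cauchy_span:
  assumes "e \<in> span orbit" "0 < r"
  shows "\<exists>N0. \<forall>N\<ge>N0. \<forall>M\<ge>N0. hn (block_avg N e - block_avg M e) < r"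
proof -
  obtain n0 B where n0: "0 < n0" and "0 \<le> B"
    and bound: "\<And>N M. n0 \<le> N \<Longrightarrow> n0 \<le> M \<Longrightarrow>
      (hn (block_avg N e - block_avg M e))\<^sup>2 \<le> B * (1 / real N + 1 / real M)"
    using assms(1) by (rule block_avg_diff_bound) blast
  obtain L :: nat where L: "2 * B / r\<^sup>2 < real L" using reals_Archimedean2 by blast
  have "hn (block_avg N e - block_avg M e) < r" if "max n0 (Suc L) \<le> N" "max n0 (Suc L) \<le> M" for N M
  proof -
    have "1 / real N \<le> 1 / real (Suc L)" "1 / real M \<le> 1 / real (Suc L)"
      using that by (simp_all add: frac_le)
    then have "B * (1 / real N + 1 / real M) \<le> B * (2 / real (Suc L))"
      using \<open>0 \<le> B\<close> by (intro mult_left_mono) auto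
    also have "\<dots> < r\<^sup>2"
      using L \<open>0 < r\<close> by (simp add: field_simps) (smt (verit) zero_less_power)
    finally have "(hn (block_avg N e - block_avg M e))\<^sup>2 < r\<^sup>2"
      using bound[of N M] that by simp
    then show ?thesis using \<open>0 < r\<close> by (simp add: power2_less_imp_less)
  qed
  then show ?thesis by blast
qed

lemma block_avg_diff:
  "k \<le> N \<Longrightarrow> block_avg N (x - y) = block_avg N x - block_avg N y"
  using block_avg_lincomb[of N "-1" y x] by simp

lemma block_avg_cauchy:
  assumes "0 < r" shows "\<exists>N0. \<forall>N\<ge>N0. \<forall>M\<ge>N0. hn (block_avg N u - block_avg M u) < r"
proof -
  obtain e where e: "e \<in> span orbit" "hn (u - e) < r / 3"
    using dense_in_span_orbit assms unfolding dense_in_def by (meson divide_pos_pos zero_less_numeral)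
  obtain N1 where N1: "\<forall>N\<ge>N1. \<forall>M\<ge>N1. hn (block_avg N e - block_avg M e) < r / 3"
    using block_avg_cauchy_span[OF e(1)] assms by (meson divide_pos_pos zero_less_numeral)
  have "hn (block_avg N u - block_avg M u) < r" if "max N1 k \<le> N" "max N1 k \<le> M" for N M
  proof -
    have "block_avg N u - block_avg M u
        = block_avg N (u - e) + (block_avg N e - block_avg M e) + block_avg M (e - u)"
      using that by (simp add: block_avg_diff)
    then have "hn (block_avg N u - block_avg M u)
        \<le> hn (block_avg N (u - e)) + hn (block_avg N e - block_avg M e) + hn (block_avg M (e - u))"
      by (metis hn_triangle add_right_mono order_trans)
    moreover have "hn (block_avg N (u - e)) < r / 3" "hn (block_avg M (e - u)) < r / 3"
      using hn_block_avg[of N "u - e"] hn_block_avg[of M "e - u"] e(2) hn_diff_commute[of e u] that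
      by auto
    ultimately show ?thesis using N1 that by fastforce
  qed
  then show ?thesis by blast
qed

definition P :: "'h \<Rightarrow> 'h" where
  "P u = (SOME x. norm_tendsto (\<lambda>N. block_avg N u) x)"

lemma norm_tendsto_block_avg: "norm_tendsto (\<lambda>N. block_avg N u) (P u)"
  unfolding P_def by (rule someI_ex, rule cauchy_imp_norm_tendsto, rule block_avg_cauchy)

lemma P_lincomb: "P (scl c x + y) = scl c (P x) + P y"
proof (rule norm_tendsto_unique[OF norm_tendsto_block_avg])
  have "\<forall>\<^sub>F N in sequentially. scl c (block_avg N x) + block_avg N y = block_avg N (scl c x + y)"
    using eventually_ge_at_top[of k] by eventually_elim (simp add: block_avg_lincomb)
  then show "norm_tendsto (\<lambda>N. block_avg N (scl c x + y)) (scl c (P x) + P y)"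
    by (rule norm_tendsto_cong[OF norm_tendsto_lincomb[OF norm_tendsto_block_avg norm_tendsto_block_avg]])
qed

lemma P_zero: "P 0 = 0"
  using P_lincomb[of 1 0 0] by simp

lemma P_add: "P (x + y) = P x + P y"
  using P_lincomb[of 1 x y] by simp

lemma P_scale: "P (scl c x) = scl c (P x)"
  using P_lincomb[of c x 0] by (simp add: P_zero)

lemma P_diff: "P (x - y) = P x - P y"
  using P_lincomb[of "-1" y x] by simp

lemma P_linear: "Vector_Spaces.linear scl scl P"
  unfolding Vector_Spaces.linear_iff using vector_space_axioms P_add P_scale by blast

lemma hn_P: "hn (P u) \<le> hn u"
proof (rule norm_tendsto_hn_le[OF norm_tendsto_block_avg])
  show "\<forall>\<^sub>F N in sequentially. hn (block_avg N u) \<le> hn u"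
    using eventually_ge_at_top[of k] by eventually_elim (rule hn_block_avg)
qed

lemma U_weak_tendsto_span:
  assumes "e \<in> span orbit" "f \<in> span orbit"
  shows "(\<lambda>m. ip (U m e) f) \<longlonglongrightarrow> ip (P e) f"
proof -
  obtain N where N: "Suc k \<le> N" and shift: "\<And>a b. N \<le> a \<Longrightarrow> N \<le> b \<Longrightarrow> ip (U a e) f = ip (U b e) f"
    using tail_stable_span[OF assms] by (rule tail_stableE) blast
  define d where "d = ip (U N e) f"
  have tail: "ip (U m e) f = d" if "N \<le> m" for m
    unfolding d_def using that by (rule shift) simp
  have const: "\<forall>\<^sub>F m in sequentially. ip (U m e) f = d"
    using eventually_ge_at_top[of N] by eventually_elim (rule tail)
  have "\<forall>\<^sub>F M in sequentially. ip (block_avg M e) f = d"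
    using eventually_ge_at_top[of N]
  proof eventually_elim
    case (elim M)
    then have "(\<Sum>m\<in>{M<..2*M}. ip (U m e) f) = of_nat M * d"
      by (simp add: tail)
    then show ?case using elim N by (simp add: ip_block_avg_left)
  qed
  then have "ip (P e) f = d"
    by (intro LIMSEQ_unique[OF norm_tendsto_ip[OF norm_tendsto_block_avg]] tendsto_eventually)
  then show ?thesis using tendsto_eventually[OF const] by simp
qed

lemma U_weak_tendsto: "(\<lambda>m. ip (U m u) v) \<longlonglongrightarrow> ip (P u) v"
proof -
  have "(\<lambda>m. ip (U m e) v) \<longlonglongrightarrow> ip (P e) v" if e: "e \<in> span orbit" for e
  proof (rule dense_in_tendsto[OF dense_in_span_orbit hn_nonneg])
    show "\<forall>\<^sub>F m in sequentially. \<forall>x y. cmod (ip (U m e) x - ip (U m e) y) \<le> hn e * hn (x - y)"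
      using eventually_ge_at_top[of "Suc k"]
    proof eventually_elim
      case (elim m)
      then show ?case using ip_lipschitz_right[of "U m e"] by (simp add: hn_U)
    qed
    show "cmod (ip (P e) x - ip (P e) y) \<le> hn e * hn (x - y)" for x y
      using ip_lipschitz_right[of "P e" x y] hn_P[of e] hn_nonneg[of "x - y"]
      by (meson mult_right_mono order_trans)
  qed (rule U_weak_tendsto_span[OF e])
  then show ?thesis
  proof (rule dense_in_tendsto[OF dense_in_span_orbit hn_nonneg, rotated 2])
    show "\<forall>\<^sub>F m in sequentially. \<forall>x y. cmod (ip (U m x) v - ip (U m y) v) \<le> hn v * hn (x - y)"
      using eventually_ge_at_top[of "Suc k"]
    proof eventually_elim
      case (elim m)
      then show ?case using ip_lipschitz_left[of "U m _" v "U m _"] by (simp add: hn_U flip: U_diff)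
    qed
    show "cmod (ip (P x) v - ip (P y) v) \<le> hn v * hn (x - y)" for x y
      using ip_lipschitz_left[of "P x" v "P y"] hn_P[of "x - y"] hn_nonneg[of v]
      by (metis P_diff mult_left_mono order_trans)
  qed
qed

lemma P_self_adjoint: "ip (P u) v = ip u (P v)"
proof -
  have "\<forall>\<^sub>F m in sequentially. cnj (ip (U m v) u) = ip (U m u) v"
    using eventually_ge_at_top[of "Suc k"]
    by eventually_elim (simp add: U_self_adjoint ip_cnj_sym[of u])
  then have "(\<lambda>m. ip (U m u) v) \<longlonglongrightarrow> cnj (ip (P v) u)"
    using tendsto_cnj[OF U_weak_tendsto] by (rule Lim_transform_eventually[rotated])
  then have "ip (P u) v = cnj (ip (P v) u)"
    using U_weak_tendsto LIMSEQ_unique by blast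
  then show ?thesis by (simp add: ip_cnj_sym[of u])
qed

lemma P_idempotent_span:
  assumes e: "e \<in> span orbit" and f: "f \<in> span orbit"
  shows "ip (P (P f)) e = ip (P f) e"
proof -
  obtain N where N: "Suc k \<le> N"
    and absorb: "\<And>a b. N \<le> a \<Longrightarrow> N \<le> b \<Longrightarrow> a \<noteq> b \<Longrightarrow> ip (U a (U b f)) e = ip (U a f) e"
    using tail_stable_span[OF f e] by (rule tail_stableE) blast
  have PU: "ip (U a (P f)) e = ip (U a f) e" if a: "N \<le> a" for a
  proof -
    have "\<forall>\<^sub>F b in sequentially. ip (U b f) (U a e) = ip (U a f) e"
      using eventually_ge_at_top[of "Suc a"]
    proof eventually_elim
      case (elim b)
      have "ip (U b f) (U a e) = ip (U a (U b f)) e"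
        using U_self_adjoint[of a] N a by simp
      also have "\<dots> = ip (U a f) e" using absorb[of a b] a elim by simp
      finally show ?case .
    qed
    then have "ip (P f) (U a e) = ip (U a f) e"
      by (intro LIMSEQ_unique[OF U_weak_tendsto] tendsto_eventually)
    then show ?thesis using U_self_adjoint[of a] N a by simp
  qed
  have "\<forall>\<^sub>F a in sequentially. ip (U a f) e = ip (U a (P f)) e"
    using eventually_ge_at_top[of N] by eventually_elim (simp add: PU)
  then have "(\<lambda>a. ip (U a (P f)) e) \<longlonglongrightarrow> ip (P f) e"
    using U_weak_tendsto by (rule Lim_transform_eventually[rotated])
  then show ?thesis using U_weak_tendsto LIMSEQ_unique by blast
qed

lemma P_idempotent: "P (P u) = P u"
proof -
  have "ip (P (P f)) v = ip (P f) v" if f: "f \<in> span orbit" for f v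
  proof (rule dense_in_eq[OF dense_in_span_orbit hn_nonneg,
        where F = "\<lambda>x. ip (P (P f)) x" and G = "\<lambda>x. ip (P f) x"])
    show "cmod (ip (P (P f)) x - ip (P (P f)) y) \<le> hn f * hn (x - y)" for x y
      using ip_lipschitz_right[of "P (P f)" x y] hn_P[of "P f"] hn_P[of f] hn_nonneg[of "x - y"]
      by (meson mult_right_mono order_trans)
    show "cmod (ip (P f) x - ip (P f) y) \<le> hn f * hn (x - y)" for x y
      using ip_lipschitz_right[of "P f" x y] hn_P[of f] hn_nonneg[of "x - y"]
      by (meson mult_right_mono order_trans)
  qed (rule P_idempotent_span[OF _ f])
  then have "ip (P (P u)) v = ip (P u) v" for v
  proof (rule dense_in_eq[OF dense_in_span_orbit hn_nonneg,
        where F = "\<lambda>x. ip (P (P x)) v" and G = "\<lambda>x. ip (P x) v", rotated 2])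
    show "cmod (ip (P (P x)) v - ip (P (P y)) v) \<le> hn v * hn (x - y)" for x y
      using ip_lipschitz_left[of "P (P x)" v "P (P y)"] hn_P[of "P (x - y)"] hn_P[of "x - y"] hn_nonneg[of v]
      by (metis P_diff mult_left_mono order_trans)
    show "cmod (ip (P x) v - ip (P y) v) \<le> hn v * hn (x - y)" for x y
      using ip_lipschitz_left[of "P x" v "P y"] hn_P[of "x - y"] hn_nonneg[of v]
      by (metis P_diff mult_left_mono order_trans)
  qed
  then show ?thesis by (rule ip_left_cancel)
qed

lemma weak_op_limit_orth_projection:
  "weak_op_limit ip (\<lambda>m. \<pi> (sA A m)) P \<and> orth_projection scl ip P"
  unfolding weak_op_limit_def orth_projection_def
  using U_weak_tendsto P_linear P_idempotent P_self_adjoint by (simp add: fun_eq_iff)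

end

theorem mainTheorem3:
  fixes chi :: "(cantor \<Rightarrow> cantor) \<Rightarrow> complex"
    and scl :: "complex \<Rightarrow> 'h::ab_group_add \<Rightarrow> 'h"
    and ip :: "'h \<Rightarrow> 'h \<Rightarrow> complex"
    and \<pi> :: "(cantor \<Rightarrow> cantor) \<Rightarrow> 'h \<Rightarrow> 'h"
    and \<xi> :: 'h
    and A :: "cantor set"
  assumes "indecomposable_character chi"
    and "GNS_triple chi scl ip \<pi> \<xi>"
    and "nice A"
  shows "\<exists>P. weak_op_limit ip (\<lambda>m. \<pi> (sA A m)) P \<and> orth_projection scl ip P"
proof -
  have "\<And>g h. g \<in> S2inf \<Longrightarrow> h \<in> S2inf \<Longrightarrow> chi (g \<circ> h) = chi (h \<circ> g)"
    using assms(1) unfolding indecomposable_character_def is_character_def by blast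
  moreover obtain k where "depends_below k A"
    using nice_imp_depends_below[OF assms(3)] by blast
  moreover have "complex_hilbert_space scl ip" "unitary_rep scl ip \<pi>" "cyclic_vector scl ip \<pi> \<xi>"
    "\<And>g. g \<in> S2inf \<Longrightarrow> chi g = ip (\<pi> g \<xi>) \<xi>"
    using assms(2) unfolding GNS_triple_def by blast+
  ultimately interpret nice_set_rep scl ip \<pi> \<xi> chi A k
    by (intro nice_set_rep.intro tracial_cyclic_rep.intro tracial_cyclic_rep_axioms.intro
        nice_set_rep_axioms.intro)
  show ?thesis using weak_op_limit_orth_projection by blast
qed

end
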